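(* In the Rustichini setting there exists a game-dependent constant $\operatorname{Lip}_\Delta<\infty$ such that for every nonempty $F\in\mathcal F$ and every $x\in\mathcal K$, $$\max_{\pi\in\mathcal N(F)}\Delta(\pi,x)\le\operatorname{Lip}_\Delta\operatorname{dist}_1(x,F).$$
   Context: Rustichini setting: a $k$-action partial monitoring game with finite latent space $\mathcal Z$, loss $\mathcal L:[k]\times\mathcal Z\to[0,1]$, signal $\mathcal S:[k]\times\mathcal Z\to\Sigma$; $\mathcal K$ = probability simplex on $\mathcal Z$ (a subset of $\mathbb R^{\mathcal Z}$); $\Delta_k$ = probability simplex on $[k]$; $\mathcal L(\pi,x)=\sum_{a,z}\pi(a)x(z)\mathcal L(a,z)$; $\mathcal S(a,x)$ = law of $\mathcal S(a,z)$, $z\sim x$; $x\,\mathrm R\,y$ iff $\mathcal S(a,x)=\mathcal S(a,y)$ for all $a$; $\mathcal V(\pi,x)=\sup_{y\,\mathrm R\,x}\mathcal L(\pi,y)$; $\mathcal V_\star(x)=\min_{\pi\in\Delta_k}\mathcal V(\pi,x)$; $\Delta(\pi,x)=\mathcal V(\pi,x)-\mathcal V_\star(x)$. $m$ is the smallest integer with $\mathcal V_\star(x)=\min_{\alpha\in[m]}\mathcal V^m(x)_\alpha$ for some linear $\mathcal V^m:\mathcal K\to\mathbb R^m$; cells $P_\alpha=\{x\in\mathcal K:\mathcal V_\star(x)=\mathcal V^m(x)_\alpha\}$; $\mathcal F=\bigcup_{\alpha\in[m]}\operatorname{faces}(P_\alpha)$. $\mathcal N(x)=\{\pi\in\Delta_k:\Delta(\pi,x)=0\}$;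 for nonempty $F\in\mathcal F$, $\mathcal N(F)=\mathcal N(x)$ for any $x$ in the relative interior of $F$ (this does not depend on the choice of $x$). $\operatorname{dist}_1(x,F)=\min_{y\in F}\|x-y\|_1$. *)

theory Defs
  imports "HOL-Analysis.Analysis"
begin

text \<open>Rustichini setting. Actions: finite type 'a (= [k]); latent space: finite type 'z;
  signals: arbitrary type 's. Distributions are vectors in real^'a, real^'z.\<close>

definition prob_simplex :: "(real^'n::finite) set" where
  "prob_simplex = {x. (\<forall>i. 0 \<le> x $ i) \<and> (\<Sum>i\<in>UNIV. x $ i) = 1}"

definition lossE :: "('a::finite \<Rightarrow> 'z::finite \<Rightarrow> real) \<Rightarrow> real^'a \<Rightarrow> real^'z \<Rightarrow> real" where
  "lossE L \<pi> x = (\<Sum>a\<in>UNIV. \<Sum>z\<in>UNIV. \<pi> $ a * x $ z * L a z)"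

definition sig_equiv :: "('a \<Rightarrow> 'z::finite \<Rightarrow> 's) \<Rightarrow> real^'z \<Rightarrow> real^'z \<Rightarrow> bool" where
  "sig_equiv S x y \<longleftrightarrow>
     (\<forall>a \<sigma>. (\<Sum>z\<in>{z. S a z = \<sigma>}. x $ z) = (\<Sum>z\<in>{z. S a z = \<sigma>}. y $ z))"

definition Vfun :: "('a::finite \<Rightarrow> 'z::finite \<Rightarrow> real) \<Rightarrow> ('a \<Rightarrow> 'z \<Rightarrow> 's) \<Rightarrow> real^'a \<Rightarrow> real^'z \<Rightarrow> real" where
  "Vfun L S \<pi> x = (SUP y\<in>{y\<in>prob_simplex. sig_equiv S y x}. lossE L \<pi> y)"

definition Vstar :: "('a::finite \<Rightarrow> 'z::finite \<Rightarrow> real) \<Rightarrow> ('a \<Rightarrow> 'z \<Rightarrow> 's) \<Rightarrow> real^'z \<Rightarrow> real" where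
  "Vstar L S x = (INF \<pi>\<in>(prob_simplex :: (real^'a) set). Vfun L S \<pi> x)"

definition gap :: "('a::finite \<Rightarrow> 'z::finite \<Rightarrow> real) \<Rightarrow> ('a \<Rightarrow> 'z \<Rightarrow> 's) \<Rightarrow> real^'a \<Rightarrow> real^'z \<Rightarrow> real" where
  "gap L S \<pi> x = Vfun L S \<pi> x - Vstar L S x"

definition linf :: "real^'z::finite \<Rightarrow> real^'z \<Rightarrow> real" where
  "linf c x = (\<Sum>z\<in>UNIV. c $ z * x $ z)"

definition is_repr :: "(real^'z::finite \<Rightarrow> real) \<Rightarrow> nat \<Rightarrow> (nat \<Rightarrow> real^'z) \<Rightarrow> bool" where
  "is_repr Vs n c \<longleftrightarrow> 0 < n \<and> (\<forall>x\<in>prob_simplex. Vs x = Min ((\<lambda>\<alpha>. linf (c \<alpha>) x) ` {..<n}))"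

definition cell :: "(real^'z::finite \<Rightarrow> real) \<Rightarrow> (nat \<Rightarrow> real^'z) \<Rightarrow> nat \<Rightarrow> (real^'z) set" where
  "cell Vs c \<alpha> = {x\<in>prob_simplex. Vs x = linf (c \<alpha>) x}"

definition face_family :: "(real^'z::finite \<Rightarrow> real) \<Rightarrow> nat \<Rightarrow> (nat \<Rightarrow> real^'z) \<Rightarrow> (real^'z) set set" where
  "face_family Vs m c = (\<Union>\<alpha>\<in>{..<m}. {F. F face_of cell Vs c \<alpha>})"

definition Nset :: "('a::finite \<Rightarrow> 'z::finite \<Rightarrow> real) \<Rightarrow> ('a \<Rightarrow> 'z \<Rightarrow> 's) \<Rightarrow> real^'z \<Rightarrow> (real^'a) set" where
  "Nset L S x = {\<pi>\<in>prob_simplex. gap L S \<pi> x = 0}"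

definition NF :: "('a::finite \<Rightarrow> 'z::finite \<Rightarrow> real) \<Rightarrow> ('a \<Rightarrow> 'z \<Rightarrow> 's) \<Rightarrow> (real^'z) set \<Rightarrow> (real^'a) set" where
  "NF L S F = Nset L S (SOME x. x \<in> rel_interior F)"

definition dist1 :: "real^'z::finite \<Rightarrow> (real^'z) set \<Rightarrow> real" where
  "dist1 x F = (INF y\<in>F. \<Sum>z\<in>UNIV. \<bar>x $ z - y $ z\<bar>)"

end

theory Submission
  imports Defs
begin

text \<open>The gap \<open>\<Delta>(\<pi>, \<cdot>) = V(\<pi>, \<cdot>) - V\<^sub>\<star>\<close> is Lipschitz on the simplex in the $\ell_1$ norm.
  For \<open>V\<^sub>\<star>\<close>, a minimum of finitely many linear functions, this is immediate. For \<open>V(\<pi>, \<cdot>)\<close>,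
  a supremum of the linear loss over a signal class, it follows from a Hoffman-type bound: every
  point of the signal class of \<open>x\<close> is within \<open>O(\<parallel>x - y\<parallel>\<^sub>1)\<close> of the signal class of \<open>y\<close>.
  To prove it, the difference is first replaced, without changing its signal law, by a conformal
  vector whose orthant meets the signal kernel only in \<open>0\<close>; on each of the finitely many such
  orthants the $\ell_1$ norm is bounded by the signal norm by compactness.

  On a face \<open>F\<close> of a cell, \<open>V\<^sub>\<star>\<close> is linear and \<open>V(\<pi>, \<cdot>)\<close> is concave, so \<open>\<Delta>(\<pi>, \<cdot>)\<close> is a
  nonnegative concave function on \<open>F\<close>. For \<open>\<pi> \<in> N(F)\<close> it vanishes at a relative interior point,
  hence on all of \<open>F\<close>, and the Lipschitz bound gives \<open>\<Delta>(\<pi>, x) \<le> Lip \<cdot> dist\<^sub>1(x, F)\<close>.\<close>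

section \<open>The $\ell_1$ norm and signal laws\<close>

definition norm1 :: "real^'n::finite \<Rightarrow> real" where
  "norm1 v = (\<Sum>i\<in>UNIV. \<bar>v $ i\<bar>)"

lemma norm1_nonneg: "0 \<le> norm1 v"
  unfolding norm1_def by (intro sum_nonneg) auto

lemma norm1_eq_0_iff: "norm1 v = 0 \<longleftrightarrow> v = 0"
  unfolding norm1_def by (simp add: sum_nonneg_eq_0_iff vec_eq_iff)

lemma norm1_scaleR: "norm1 (r *\<^sub>R v) = \<bar>r\<bar> * norm1 v"
  unfolding norm1_def by (simp add: abs_mult sum_distrib_left)

lemma norm1_minus_commute: "norm1 (u - v) = norm1 (v - u)"
  unfolding norm1_def by (simp add: abs_minus_commute)

definition signal_law :: "('a \<Rightarrow> 'z::finite \<Rightarrow> 's) \<Rightarrow> real^'z \<Rightarrow> 'a \<Rightarrow> 's \<Rightarrow> real" where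
  "signal_law S x a \<sigma> = (\<Sum>z | S a z = \<sigma>. x $ z)"

lemma sig_equiv_iff_signal_law: "sig_equiv S x y \<longleftrightarrow> signal_law S x = signal_law S y"
  by (simp add: sig_equiv_def signal_law_def fun_eq_iff)

lemma signal_law_add: "signal_law S (x + y) a \<sigma> = signal_law S x a \<sigma> + signal_law S y a \<sigma>"
  by (simp add: signal_law_def sum.distrib)

lemma signal_law_diff: "signal_law S (x - y) a \<sigma> = signal_law S x a \<sigma> - signal_law S y a \<sigma>"
  by (simp add: signal_law_def sum_subtractf)

lemma signal_law_scaleR: "signal_law S (r *\<^sub>R x) a \<sigma> = r * signal_law S x a \<sigma>"
  by (simp add: signal_law_def sum_distrib_left)

lemma sum_signal_law: "(\<Sum>\<sigma>\<in>range (S a). signal_law S x a \<sigma>) = (\<Sum>z\<in>UNIV. x $ z)"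
proof -
  have "(\<Sum>z\<in>UNIV. x $ z) = (\<Sum>\<sigma>\<in>S a ` UNIV. \<Sum>z\<in>{z\<in>UNIV. S a z = \<sigma>}. x $ z)"
    by (rule sum.image_gen) simp
  then show ?thesis by (simp add: signal_law_def)
qed

lemma sig_equiv_sum_eq:
  fixes S :: "'a \<Rightarrow> 'z::finite \<Rightarrow> 's"
  assumes "sig_equiv S y x"
  shows "(\<Sum>z\<in>UNIV. y $ z) = (\<Sum>z\<in>UNIV. x $ z)"
  using assms sum_signal_law[of S y undefined] sum_signal_law[of S x undefined] by (simp add: sig_equiv_iff_signal_law)

lemma sig_equiv_add_scaleR:
  assumes "sig_equiv S u x" "sig_equiv S v y"
  shows "sig_equiv S (a *\<^sub>R u + b *\<^sub>R v) (a *\<^sub>R x + b *\<^sub>R y)"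
  using assms by (simp add: sig_equiv_iff_signal_law fun_eq_iff signal_law_add signal_law_scaleR)

definition signal_norm :: "('a::finite \<Rightarrow> 'z::finite \<Rightarrow> 's) \<Rightarrow> real^'z \<Rightarrow> real" where
  "signal_norm S v = (\<Sum>a\<in>UNIV. \<Sum>\<sigma>\<in>range (S a). \<bar>signal_law S v a \<sigma>\<bar>)"

lemma signal_norm_nonneg: "0 \<le> signal_norm S v"
  unfolding signal_norm_def by (intro sum_nonneg) auto

lemma signal_norm_scaleR: "signal_norm S (r *\<^sub>R v) = \<bar>r\<bar> * signal_norm S v"
  unfolding signal_norm_def by (simp add: signal_law_scaleR abs_mult sum_distrib_left)

lemma signal_norm_eq_0D:
  assumes "signal_norm S v = 0"
  shows "signal_law S v a \<sigma> = 0"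
proof (cases "\<sigma> \<in> range (S a)")
  case True
  have "\<forall>a\<in>UNIV. \<forall>\<sigma>\<in>range (S a). \<bar>signal_law S v a \<sigma>\<bar> = 0"
    using assms unfolding signal_norm_def
    by (simp add: sum_nonneg sum_nonneg_eq_0_iff)
  with True show ?thesis by auto
next
  case False
  then have "{z. S a z = \<sigma>} = {}" by auto
  then show ?thesis by (simp add: signal_law_def)
qed

lemma continuous_on_signal_norm: "continuous_on X (signal_norm S)"
  unfolding signal_norm_def signal_law_def by (intro continuous_intros)

lemma signal_norm_le_norm1:
  fixes S :: "'a::finite \<Rightarrow> 'z::finite \<Rightarrow> 's"
  shows "signal_norm S v \<le> real CARD('a) * norm1 v"
proof -
  have "(\<Sum>\<sigma>\<in>range (S a). \<bar>signal_law S v a \<sigma>\<bar>) \<le> norm1 v" for a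
  proof -
    have "(\<Sum>\<sigma>\<in>range (S a). \<bar>signal_law S v a \<sigma>\<bar>) \<le> (\<Sum>\<sigma>\<in>range (S a). signal_law S (\<chi> z. \<bar>v $ z\<bar>) a \<sigma>)"
      unfolding signal_law_def by (intro sum_mono) (simp add: sum_abs)
    also have "\<dots> = norm1 v"
      unfolding sum_signal_law norm1_def by simp
    finally show ?thesis .
  qed
  then have "signal_norm S v \<le> (\<Sum>a\<in>(UNIV::'a set). norm1 v)"
    unfolding signal_norm_def by (intro sum_mono)
  then show ?thesis by simp
qed

section \<open>A Hoffman bound for signal classes\<close>

lemma norm1_le_homogeneous_on_cone:
  fixes f :: "real^'n::finite \<Rightarrow> real"
  assumes K: "closed K" "\<And>r k. 0 \<le> r \<Longrightarrow> k \<in> K \<Longrightarrow> r *\<^sub>R k \<in> K"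
    and f: "continuous_on K f" "\<And>k. 0 \<le> f k" "\<And>r k. 0 \<le> r \<Longrightarrow> f (r *\<^sub>R k) = r * f k"
    and definite: "\<And>k. k \<in> K \<Longrightarrow> f k = 0 \<Longrightarrow> k = 0"
  shows "\<exists>C>0. \<forall>k\<in>K. norm1 k \<le> C * f k"
proof -
  define U where "U = K \<inter> {k. norm1 k = 1}"
  have norm1_pos: "0 < norm1 k" if "k \<noteq> 0" for k
    using that norm1_eq_0_iff norm1_nonneg by (metis order_le_less)
  have normalize: "(1 / norm1 k) *\<^sub>R k \<in> U" if "k \<in> K" "k \<noteq> 0" for k
    using that K(2) norm1_pos[OF that(2)] unfolding U_def by (simp add: norm1_scaleR)
  consider "U = {}" | "U \<noteq> {}" by blast
  then show ?thesis
  proof cases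
    case 1
    then have "K \<subseteq> {0}" using normalize by blast
    then show ?thesis using f(2) by (intro exI[of _ 1]) (auto simp: norm1_def)
  next
    case 2
    have "closed {k::real^'n. norm1 k = 1}"
      unfolding norm1_def by (intro closed_Collect_eq continuous_intros)
    moreover have "bounded U"
      unfolding bounded_iff U_def norm1_def by (metis (mono_tags) IntD2 mem_Collect_eq norm_le_l1_cart)
    ultimately have "compact U"
      using K(1) by (simp add: U_def compact_eq_bounded_closed closed_Int)
    then obtain k0 where k0: "k0 \<in> U" "\<And>k. k \<in> U \<Longrightarrow> f k0 \<le> f k"
      using continuous_attains_inf[OF _ 2 continuous_on_subset[OF f(1)]] unfolding U_def by blast
    have "f k0 \<noteq> 0"
      using k0(1) definite unfolding U_def by (force simp: norm1_def)
    then have pos: "0 < f k0" using f(2) order_le_less by metis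
    have "norm1 k \<le> (1 / f k0) * f k" if "k \<in> K" for k
    proof (cases "k = 0")
      case True
      then show ?thesis using f(2) pos by (simp add: norm1_def)
    next
      case False
      then have "0 < norm1 k" and "f k0 \<le> f ((1 / norm1 k) *\<^sub>R k)"
        using norm1_pos normalize that k0(2) by auto
      then show ?thesis using pos f(3) by (simp add: field_simps)
    qed
    then show ?thesis using pos by (intro exI[of _ "1 / f k0"]) auto
  qed
qed

lemma diff_mult_in_closed_segment_0:
  fixes w k s :: real
  assumes "0 < k * w" "0 \<le> s" "s \<le> w / k"
  shows "w - s * k \<in> closed_segment 0 w"
proof (cases "0 < w")
  case True
  then have "0 < k" using assms(1) by (simp add: zero_less_mult_iff)
  then have "s * k \<le> w" "0 \<le> s * k" using assms(2,3) by (simp_all add: pos_le_divide_eq)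
  with True show ?thesis by (simp add: closed_segment_eq_real_ivl)
next
  case False
  then have "w < 0" "k < 0" using assms(1) by (auto simp: zero_less_mult_iff)
  then have "w \<le> s * k" "s * k \<le> 0" using assms(2,3) by (simp_all add: neg_le_divide_eq mult_nonneg_nonpos)
  with \<open>w < 0\<close> show ?thesis by (simp add: closed_segment_eq_real_ivl)
qed

definition conformal_orthant :: "('z::finite \<Rightarrow> real) \<Rightarrow> (real^'z) set" where
  "conformal_orthant \<sigma> = {k. \<forall>z. (\<sigma> z = 0 \<longrightarrow> k $ z = 0) \<and> 0 \<le> k $ z * \<sigma> z}"

definition transversal :: "('a \<Rightarrow> 'z::finite \<Rightarrow> 's) \<Rightarrow> ('z \<Rightarrow> real) \<Rightarrow> bool" where
  "transversal S \<sigma> \<longleftrightarrow> (\<forall>k\<in>conformal_orthant \<sigma>. (\<forall>a s. signal_law S k a s = 0) \<longrightarrow> k = 0)"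

lemma conformal_orthant_sgn_mult_pos:
  assumes "k \<in> conformal_orthant (\<lambda>z. sgn (w $ z))" "k $ z \<noteq> 0"
  shows "0 < k $ z * w $ z"
proof -
  have "(sgn (w $ z) = 0 \<longrightarrow> k $ z = 0) \<and> 0 \<le> k $ z * sgn (w $ z)"
    using assms(1) unfolding conformal_orthant_def by blast
  with assms(2) show ?thesis by (auto simp: sgn_real_def zero_less_mult_iff split: if_splits)
qed

lemma closed_conformal_orthant:
  fixes \<sigma> :: "'z::finite \<Rightarrow> real"
  shows "closed (conformal_orthant \<sigma>)"
proof -
  have "closed {k::real^'z. (\<sigma> z = 0 \<longrightarrow> k $ z = 0) \<and> 0 \<le> k $ z * \<sigma> z}" for z
    by (cases "\<sigma> z = 0") (auto intro!: closed_Collect_eq closed_Collect_le continuous_intros)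
  then show ?thesis
    unfolding conformal_orthant_def Collect_all_eq by (intro closed_INT) auto
qed

lemma transversal_norm1_le:
  assumes "transversal S \<sigma>"
  shows "\<exists>C>0. \<forall>k\<in>conformal_orthant \<sigma>. norm1 k \<le> C * signal_norm S k"
proof (rule norm1_le_homogeneous_on_cone)
  show "r *\<^sub>R k \<in> conformal_orthant \<sigma>" if "0 \<le> r" "k \<in> conformal_orthant \<sigma>" for r k
    using that by (auto simp: conformal_orthant_def mult.assoc)
  show "k = 0" if "k \<in> conformal_orthant \<sigma>" "signal_norm S k = 0" for k
    using assms that signal_norm_eq_0D[of S k] unfolding transversal_def by simp
qed (simp_all add: closed_conformal_orthant continuous_on_signal_norm signal_norm_nonneg signal_norm_scaleR)

lemma sign_transversal_norm1_le:
  fixes S :: "'a::finite \<Rightarrow> 'z::finite \<Rightarrow> 's"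
  shows "\<exists>C>0. \<forall>k. transversal S (\<lambda>z. sgn (k $ z)) \<longrightarrow> norm1 k \<le> C * signal_norm S k"
proof -
  define G where "G = {\<sigma>::'z \<Rightarrow> real. (\<forall>z. \<sigma> z \<in> {-1, 0, 1}) \<and> transversal S \<sigma>}"
  have "G \<subseteq> (\<Pi>\<^sub>E z\<in>UNIV. {-1, 0, 1})"
    unfolding G_def by (auto simp: PiE_UNIV_domain)
  then have "finite G" by (rule finite_subset) (simp add: finite_PiE)
  have "\<forall>\<sigma>\<in>G. \<exists>C>0. \<forall>k\<in>conformal_orthant \<sigma>. norm1 k \<le> C * signal_norm S k"
    using transversal_norm1_le unfolding G_def by blast
  then obtain C where C: "\<forall>\<sigma>\<in>G. 0 < C \<sigma> \<and> (\<forall>k\<in>conformal_orthant \<sigma>. norm1 k \<le> C \<sigma> * signal_norm S k)"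
    by (rule bchoice [THEN exE])
  define Cmax where "Cmax = Max (insert 1 (C ` G))"
  have "finite (insert 1 (C ` G))" using \<open>finite G\<close> by simp
  then have Cmax: "1 \<le> Cmax" "\<And>\<sigma>. \<sigma> \<in> G \<Longrightarrow> C \<sigma> \<le> Cmax"
    unfolding Cmax_def by (auto intro!: Max_ge)
  show ?thesis
  proof (intro exI[of _ Cmax] conjI allI impI)
    fix k :: "real^'z"
    let ?\<sigma> = "\<lambda>z. sgn (k $ z)"
    assume "transversal S ?\<sigma>"
    moreover have "sgn (k $ z) \<in> {-1, 0, 1}" for z
      by (simp add: sgn_real_def)
    ultimately have "?\<sigma> \<in> G" unfolding G_def by blast
    moreover have "k \<in> conformal_orthant ?\<sigma>"
      unfolding conformal_orthant_def by (simp add: sgn_real_def mult_nonneg_nonpos)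
    ultimately have "norm1 k \<le> C ?\<sigma> * signal_norm S k" using C by blast
    also have "\<dots> \<le> Cmax * signal_norm S k"
      using Cmax(2)[OF \<open>?\<sigma> \<in> G\<close>] signal_norm_nonneg by (rule mult_right_mono)
    finally show "norm1 k \<le> Cmax * signal_norm S k" .
  qed (use Cmax in simp)
qed

text \<open>A coordinate where \<open>w / k\<close> is minimal is driven to zero by \<open>w - s k\<close>, while all other
  coordinates move towards \<open>0\<close> without changing sign.\<close>

lemma conformal_support_reduction:
  assumes "\<not> transversal S (\<lambda>z. sgn (w $ z))"
  obtains w' where "\<And>z. w' $ z \<in> closed_segment 0 (w $ z)"
    and "signal_law S w' = signal_law S w"
    and "{z. w' $ z \<noteq> 0} \<subset> {z. w $ z \<noteq> 0}"
proof -
  obtain k where k: "k \<in> conformal_orthant (\<lambda>z. sgn (w $ z))" "\<And>a s. signal_law S k a s = 0" "k \<noteq> 0"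
    using assms unfolding transversal_def by blast
  define Z where "Z = {z. k $ z \<noteq> 0}"
  have "Z \<noteq> {}" using k(3) unfolding Z_def by (auto simp: vec_eq_iff)
  have kw: "0 < k $ z * w $ z" if "z \<in> Z" for z
    using conformal_orthant_sgn_mult_pos[OF k(1)] that unfolding Z_def by blast
  define s where "s = Min ((\<lambda>z. w $ z / k $ z) ` Z)"
  have "s \<in> (\<lambda>z. w $ z / k $ z) ` Z"
    unfolding s_def using \<open>Z \<noteq> {}\<close> by (intro Min_in) auto
  then obtain z0 where z0: "z0 \<in> Z" "s = w $ z0 / k $ z0" by blast
  have s_le: "s \<le> w $ z / k $ z" if "z \<in> Z" for z
    unfolding s_def using that by simp
  have "0 < s" using kw[OF z0(1)] z0(2) by (auto simp: zero_less_divide_iff zero_less_mult_iff)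
  have w_nz: "w $ z \<noteq> 0" and k_nz: "k $ z \<noteq> 0" if "z \<in> Z" for z
    using kw[OF that] by auto
  show ?thesis
  proof
    fix z
    show "(w - s *\<^sub>R k) $ z \<in> closed_segment 0 (w $ z)"
    proof (cases "z \<in> Z")
      case True
      then show ?thesis
        using diff_mult_in_closed_segment_0[OF kw[OF True] less_imp_le[OF \<open>0 < s\<close>] s_le[OF True]]
        by simp
    next
      case False
      then show ?thesis by (simp add: Z_def)
    qed
  next
    show "signal_law S (w - s *\<^sub>R k) = signal_law S w"
      using k(2) by (simp add: fun_eq_iff signal_law_diff signal_law_scaleR)
  next
    show "{z. (w - s *\<^sub>R k) $ z \<noteq> 0} \<subset> {z. w $ z \<noteq> 0}"
    proof (rule psubsetI)
      show "{z. (w - s *\<^sub>R k) $ z \<noteq> 0} \<subseteq> {z. w $ z \<noteq> 0}"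
        using w_nz unfolding Z_def by force
      have "w $ z0 \<noteq> 0" "(w - s *\<^sub>R k) $ z0 = 0"
        using w_nz[OF z0(1)] k_nz[OF z0(1)] z0(2) by auto
      then show "{z. (w - s *\<^sub>R k) $ z \<noteq> 0} \<noteq> {z. w $ z \<noteq> 0}"
        by (metis (mono_tags) mem_Collect_eq)
    qed
  qed
qed

lemma conformal_transversal_decomposition:
  "\<exists>w. (\<forall>z. w $ z \<in> closed_segment 0 (v $ z)) \<and> signal_law S w = signal_law S v
     \<and> transversal S (\<lambda>z. sgn (w $ z))"
proof -
  define P where "P w \<longleftrightarrow> (\<forall>z. w $ z \<in> closed_segment 0 (v $ z)) \<and> signal_law S w = signal_law S v"
    for w
  have "P v" unfolding P_def by (simp add: ends_in_segment)
  then obtain w where "P w" and least: "\<And>y. P y \<Longrightarrow> card {z. w $ z \<noteq> 0} \<le> card {z. y $ z \<noteq> 0}"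
    using ex_has_least_nat[of P v "\<lambda>w. card {z. w $ z \<noteq> 0}"] by blast
  have "transversal S (\<lambda>z. sgn (w $ z))"
  proof (rule ccontr)
    assume "\<not> transversal S (\<lambda>z. sgn (w $ z))"
    then obtain w' where w': "\<And>z. w' $ z \<in> closed_segment 0 (w $ z)"
      "signal_law S w' = signal_law S w" "{z. w' $ z \<noteq> 0} \<subset> {z. w $ z \<noteq> 0}"
      using conformal_support_reduction[of S w] by blast
    have "w' $ z \<in> closed_segment 0 (v $ z)" for z
    proof -
      have "w $ z \<in> closed_segment 0 (v $ z)" using \<open>P w\<close> by (simp add: P_def)
      then have "closed_segment 0 (w $ z) \<subseteq> closed_segment 0 (v $ z)"
        by (intro closed_segment_subset convex_closed_segment ends_in_segment(1))
      with w'(1) show ?thesis by blast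
    qed
    with w'(2) \<open>P w\<close> have "P w'" by (simp add: P_def)
    moreover have "card {z. w' $ z \<noteq> 0} < card {z. w $ z \<noteq> 0}"
      by (rule psubset_card_mono[OF finite w'(3)])
    ultimately show False using least by (metis not_le)
  qed
  then show ?thesis using \<open>P w\<close> unfolding P_def by blast
qed

lemma signal_class_hoffman_bound:
  fixes S :: "'a::finite \<Rightarrow> 'z::finite \<Rightarrow> 's"
  shows "\<exists>C>0. \<forall>y y'. (\<forall>z. 0 \<le> y $ z) \<longrightarrow> (\<forall>z. 0 \<le> y' $ z) \<longrightarrow>
     (\<exists>y''. (\<forall>z. 0 \<le> y'' $ z) \<and> sig_equiv S y'' y \<and> norm1 (y'' - y') \<le> C * signal_norm S (y - y'))"
proof -
  obtain C where "C > 0" and C: "\<And>k. transversal S (\<lambda>z. sgn (k $ z)) \<Longrightarrow> norm1 k \<le> C * signal_norm S k"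
    using sign_transversal_norm1_le by blast
  show ?thesis
  proof (intro exI[of _ C] conjI allI impI \<open>C > 0\<close>)
    fix y y' :: "real^'z"
    assume y: "\<forall>z. 0 \<le> y $ z" and y': "\<forall>z. 0 \<le> y' $ z"
    obtain w where w: "\<And>z. w $ z \<in> closed_segment 0 (y $ z - y' $ z)"
      "signal_law S w = signal_law S (y - y')" "transversal S (\<lambda>z. sgn (w $ z))"
      using conformal_transversal_decomposition[of "y - y'" S] by auto
    show "\<exists>y''. (\<forall>z. 0 \<le> y'' $ z) \<and> sig_equiv S y'' y \<and> norm1 (y'' - y') \<le> C * signal_norm S (y - y')"
    proof (intro exI[of _ "y' + w"] conjI allI)
      show "0 \<le> (y' + w) $ z" for z
        using w(1)[of z] y[rule_format, of z] y'[rule_format, of z]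
        by (auto simp: closed_segment_eq_real_ivl split: if_splits)
      show "sig_equiv S (y' + w) y"
        using w(2) by (simp add: sig_equiv_iff_signal_law fun_eq_iff signal_law_add signal_law_diff)
      have "signal_norm S w = signal_norm S (y - y')"
        using w(2) by (simp add: signal_norm_def)
      then show "norm1 (y' + w - y') \<le> C * signal_norm S (y - y')"
        using C[OF w(3)] by simp
    qed
  qed
qed

section \<open>Regularity of the value functions\<close>

lemma prob_simplex_nonneg: "x \<in> prob_simplex \<Longrightarrow> 0 \<le> x $ z"
  unfolding prob_simplex_def by auto

lemma prob_simplex_sum: "x \<in> prob_simplex \<Longrightarrow> (\<Sum>z\<in>UNIV. x $ z) = 1"
  unfolding prob_simplex_def by auto

lemma convex_prob_simplex: "convex prob_simplex"
  unfolding convex_def prob_simplex_def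
  by (auto simp: sum.distrib sum_distrib_left[symmetric])

lemma lossE_add_scaleR: "lossE L \<pi> (a *\<^sub>R u + b *\<^sub>R v) = a * lossE L \<pi> u + b * lossE L \<pi> v"
  unfolding lossE_def
  by (simp add: algebra_simps sum.distrib sum_distrib_left)

lemma linf_add_scaleR: "linf c (a *\<^sub>R u + b *\<^sub>R v) = a * linf c u + b * linf c v"
  unfolding linf_def by (simp add: algebra_simps sum.distrib sum_distrib_left)

lemma lossE_diff_le:
  assumes L: "\<forall>a z. \<bar>L a z\<bar> \<le> 1" and \<pi>: "\<pi> \<in> prob_simplex"
  shows "lossE L \<pi> u - lossE L \<pi> v \<le> norm1 (u - v)"
proof -
  have "lossE L \<pi> u - lossE L \<pi> v = (\<Sum>a\<in>UNIV. \<pi> $ a * (\<Sum>z\<in>UNIV. (u $ z - v $ z) * L a z))"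
    unfolding lossE_def by (simp add: sum_subtractf[symmetric] sum_distrib_left algebra_simps)
  also have "\<dots> \<le> (\<Sum>a\<in>UNIV. \<pi> $ a * norm1 (u - v))"
  proof (intro sum_mono mult_left_mono prob_simplex_nonneg[OF \<pi>])
    fix a
    have "(u $ z - v $ z) * L a z \<le> \<bar>u $ z - v $ z\<bar> * \<bar>L a z\<bar>" for z
      by (metis abs_ge_self abs_mult)
    also have "\<bar>u $ z - v $ z\<bar> * \<bar>L a z\<bar> \<le> \<bar>u $ z - v $ z\<bar>" for z
      using L by (simp add: mult_left_le)
    finally have "(u $ z - v $ z) * L a z \<le> \<bar>u $ z - v $ z\<bar>" for z .
    then show "(\<Sum>z\<in>UNIV. (u $ z - v $ z) * L a z) \<le> norm1 (u - v)"
      unfolding norm1_def by (simp add: sum_mono)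
  qed
  also have "\<dots> = norm1 (u - v)"
    using prob_simplex_sum[OF \<pi>] by (simp add: sum_distrib_right[symmetric])
  finally show ?thesis .
qed

lemma abs_lossE_le:
  assumes L: "\<forall>a z. \<bar>L a z\<bar> \<le> 1" and "\<pi> \<in> prob_simplex" "y \<in> prob_simplex"
  shows "\<bar>lossE L \<pi> y\<bar> \<le> 1"
proof -
  have "\<bar>lossE L \<pi> y\<bar> \<le> (\<Sum>a\<in>UNIV. \<Sum>z\<in>UNIV. \<pi> $ a * y $ z)"
    unfolding lossE_def
    using assms(2,3)[THEN prob_simplex_nonneg] L
    by (intro order_trans[OF sum_abs] sum_mono order_trans[OF sum_abs])
       (simp add: abs_mult mult_left_le)
  also have "\<dots> = 1"
    using assms(2,3)[THEN prob_simplex_sum] by (simp add: sum_distrib_left[symmetric] sum_distrib_right[symmetric])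
  finally show ?thesis .
qed

definition signal_class :: "('a \<Rightarrow> 'z::finite \<Rightarrow> 's) \<Rightarrow> real^'z \<Rightarrow> (real^'z) set" where
  "signal_class S x = {y \<in> prob_simplex. sig_equiv S y x}"

lemma self_in_signal_class: "x \<in> prob_simplex \<Longrightarrow> x \<in> signal_class S x"
  unfolding signal_class_def sig_equiv_def by simp

lemma lossE_le_Vfun:
  assumes L: "\<forall>a z. \<bar>L a z\<bar> \<le> 1" and "\<pi> \<in> prob_simplex" "y \<in> signal_class S x"
  shows "lossE L \<pi> y \<le> Vfun L S \<pi> x"
  unfolding Vfun_def
proof (rule cSUP_upper)
  show "y \<in> {y \<in> prob_simplex. sig_equiv S y x}" using assms(3) by (simp add: signal_class_def)
  show "bdd_above (lossE L \<pi> ` {y \<in> prob_simplex. sig_equiv S y x})"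
    using abs_lossE_le[OF L assms(2)] by (intro bdd_aboveI[of _ 1]) (auto simp: abs_le_iff)
qed

lemma Vfun_le:
  assumes "x \<in> prob_simplex" "\<And>y. y \<in> signal_class S x \<Longrightarrow> lossE L \<pi> y \<le> M"
  shows "Vfun L S \<pi> x \<le> M"
  unfolding Vfun_def
  using assms self_in_signal_class[OF assms(1)] by (intro cSUP_least) (auto simp: signal_class_def)

lemma Vstar_le_Vfun:
  assumes L: "\<forall>a z. \<bar>L a z\<bar> \<le> 1" and "\<pi> \<in> prob_simplex" "x \<in> prob_simplex"
  shows "Vstar L S x \<le> Vfun L S \<pi> x"
  unfolding Vstar_def
proof (rule cINF_lower[OF _ assms(2)])
  have "-1 \<le> Vfun L S \<pi>' x" if "\<pi>' \<in> prob_simplex" for \<pi>'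
    using abs_lossE_le[OF L that assms(3)] lossE_le_Vfun[OF L that self_in_signal_class[OF assms(3), of S]]
    by linarith
  then show "bdd_below ((\<lambda>\<pi>. Vfun L S \<pi> x) ` prob_simplex)"
    by (intro bdd_belowI[of _ "-1"]) auto
qed

lemma gap_nonneg:
  assumes "\<forall>a z. \<bar>L a z\<bar> \<le> 1" and "\<pi> \<in> prob_simplex" "x \<in> prob_simplex"
  shows "0 \<le> gap L S \<pi> x"
  using Vstar_le_Vfun[OF assms] unfolding gap_def by simp

lemma signal_class_lipschitz:
  fixes S :: "'a::finite \<Rightarrow> 'z::finite \<Rightarrow> 's"
  shows "\<exists>C\<ge>0. \<forall>x\<in>prob_simplex. \<forall>y\<in>prob_simplex. \<forall>y'\<in>signal_class S x.
           \<exists>y''\<in>signal_class S y. norm1 (y' - y'') \<le> C * norm1 (x - y)"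
proof -
  obtain C where "C > 0" and C: "\<And>y y'. \<forall>z. 0 \<le> y $ z \<Longrightarrow> \<forall>z. 0 \<le> y' $ z \<Longrightarrow>
      \<exists>y''. (\<forall>z. 0 \<le> y'' $ z) \<and> sig_equiv S y'' y \<and> norm1 (y'' - y') \<le> C * signal_norm S (y - y')"
    using signal_class_hoffman_bound[of S] by blast
  have "\<exists>y''\<in>signal_class S y. norm1 (y' - y'') \<le> C * real CARD('a) * norm1 (x - y)"
    if x: "x \<in> prob_simplex" and y: "y \<in> prob_simplex" and "y' \<in> signal_class S x" for x y y'
  proof -
    have y': "y' \<in> prob_simplex" "sig_equiv S y' x" using \<open>y' \<in> signal_class S x\<close>
      by (auto simp: signal_class_def)
    then obtain y'' where y'': "\<forall>z. 0 \<le> y'' $ z" "sig_equiv S y'' y"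
      "norm1 (y'' - y') \<le> C * signal_norm S (y - y')"
      using C[of y y'] prob_simplex_nonneg[OF y] prob_simplex_nonneg[OF y'(1)] by blast
    have "y'' \<in> signal_class S y"
      using y'' sig_equiv_sum_eq[OF y''(2)] prob_simplex_sum[OF y]
      by (simp add: signal_class_def prob_simplex_def)
    have "signal_norm S (y - y') = signal_norm S (y - x)"
      using y'(2) by (simp add: signal_norm_def signal_law_diff sig_equiv_iff_signal_law)
    also have "\<dots> \<le> real CARD('a) * norm1 (y - x)"
      by (rule signal_norm_le_norm1)
    finally have signal_bound: "signal_norm S (y - y') \<le> real CARD('a) * norm1 (x - y)"
      by (simp only: norm1_minus_commute[of y x])
    have "norm1 (y' - y'') = norm1 (y'' - y')" by (rule norm1_minus_commute)
    also have "\<dots> \<le> C * signal_norm S (y - y')" by (rule y''(3))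
    also have "\<dots> \<le> C * (real CARD('a) * norm1 (x - y))"
      using signal_bound \<open>C > 0\<close> by simp
    finally show ?thesis using \<open>y'' \<in> signal_class S y\<close> by (auto simp: mult.assoc)
  qed
  moreover have "0 \<le> C * real CARD('a)" using \<open>C > 0\<close> by simp
  ultimately show ?thesis by blast
qed

lemma Vfun_lipschitz:
  fixes L :: "'a::finite \<Rightarrow> 'z::finite \<Rightarrow> real" and S :: "'a \<Rightarrow> 'z \<Rightarrow> 's"
  assumes L: "\<forall>a z. \<bar>L a z\<bar> \<le> 1"
  shows "\<exists>C\<ge>0. \<forall>\<pi>\<in>prob_simplex. \<forall>x\<in>prob_simplex. \<forall>y\<in>prob_simplex.
           Vfun L S \<pi> x \<le> Vfun L S \<pi> y + C * norm1 (x - y)"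
proof -
  obtain C where "C \<ge> 0" and C: "\<forall>x\<in>prob_simplex. \<forall>y\<in>prob_simplex. \<forall>y'\<in>signal_class S x.
      \<exists>y''\<in>signal_class S y. norm1 (y' - y'') \<le> C * norm1 (x - y)"
    using signal_class_lipschitz[of S] by blast
  have "Vfun L S \<pi> x \<le> Vfun L S \<pi> y + C * norm1 (x - y)"
    if \<pi>: "\<pi> \<in> prob_simplex" and x: "x \<in> prob_simplex" and y: "y \<in> prob_simplex" for \<pi> x y
  proof (rule Vfun_le[OF x])
    fix y' assume "y' \<in> signal_class S x"
    then obtain y'' where "y'' \<in> signal_class S y" "norm1 (y' - y'') \<le> C * norm1 (x - y)"
      using C x y by blast
    then show "lossE L \<pi> y' \<le> Vfun L S \<pi> y + C * norm1 (x - y)"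
      using lossE_diff_le[OF L \<pi>, of y' y''] lossE_le_Vfun[OF L \<pi>] by fastforce
  qed
  with \<open>C \<ge> 0\<close> show ?thesis by blast
qed

lemma Vfun_concave:
  assumes L: "\<forall>a z. \<bar>L a z\<bar> \<le> 1" and \<pi>: "\<pi> \<in> prob_simplex"
    and y: "y \<in> prob_simplex" and w: "w \<in> prob_simplex" and t: "0 < t" "t < 1"
  shows "(1 - t) * Vfun L S \<pi> y + t * Vfun L S \<pi> w \<le> Vfun L S \<pi> ((1 - t) *\<^sub>R y + t *\<^sub>R w)"
proof -
  define M where "M = Vfun L S \<pi> ((1 - t) *\<^sub>R y + t *\<^sub>R w)"
  have comb: "(1 - t) * lossE L \<pi> y1 + t * lossE L \<pi> w1 \<le> M"
    if "y1 \<in> signal_class S y" "w1 \<in> signal_class S w" for y1 w1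
  proof -
    have "(1 - t) *\<^sub>R y1 + t *\<^sub>R w1 \<in> signal_class S ((1 - t) *\<^sub>R y + t *\<^sub>R w)"
      using that t convexD[OF convex_prob_simplex, of y1 w1 "1 - t" t]
      by (auto simp: signal_class_def sig_equiv_add_scaleR)
    from lossE_le_Vfun[OF L \<pi> this] show ?thesis unfolding M_def by (simp add: lossE_add_scaleR)
  qed
  have "(1 - t) * Vfun L S \<pi> y \<le> M - t * lossE L \<pi> w1" if "w1 \<in> signal_class S w" for w1
  proof -
    have "Vfun L S \<pi> y \<le> (M - t * lossE L \<pi> w1) / (1 - t)"
    proof (rule Vfun_le[OF y])
      fix y1 assume "y1 \<in> signal_class S y"
      with comb[OF this that] t show "lossE L \<pi> y1 \<le> (M - t * lossE L \<pi> w1) / (1 - t)"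
        by (simp add: pos_le_divide_eq mult.commute)
    qed
    with t show ?thesis by (simp add: pos_le_divide_eq mult.commute)
  qed
  then have "Vfun L S \<pi> w \<le> (M - (1 - t) * Vfun L S \<pi> y) / t"
  proof (intro Vfun_le[OF w])
    fix w1 assume "w1 \<in> signal_class S w"
    then have "t * lossE L \<pi> w1 \<le> M - (1 - t) * Vfun L S \<pi> y"
      using \<open>\<And>w1. w1 \<in> signal_class S w \<Longrightarrow> _\<close> by fastforce
    with t show "lossE L \<pi> w1 \<le> (M - (1 - t) * Vfun L S \<pi> y) / t"
      by (simp add: pos_le_divide_eq mult.commute)
  qed
  then show ?thesis using t unfolding M_def[symmetric] by (simp add: pos_le_divide_eq mult.commute)
qed

lemma linf_diff_le: "linf c y - linf c x \<le> (\<Sum>z\<in>UNIV. \<bar>c $ z\<bar>) * norm1 (x - y)"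
proof -
  have "linf c y - linf c x = (\<Sum>z\<in>UNIV. c $ z * (y $ z - x $ z))"
    unfolding linf_def by (simp add: sum_subtractf[symmetric] algebra_simps)
  also have "\<dots> \<le> (\<Sum>z\<in>UNIV. (\<Sum>z'\<in>UNIV. \<bar>c $ z'\<bar>) * \<bar>x $ z - y $ z\<bar>)"
  proof (intro sum_mono)
    fix z
    have "c $ z * (y $ z - x $ z) \<le> \<bar>c $ z\<bar> * \<bar>x $ z - y $ z\<bar>"
      by (metis abs_ge_self abs_minus_commute abs_mult)
    also have "\<dots> \<le> (\<Sum>z'\<in>UNIV. \<bar>c $ z'\<bar>) * \<bar>x $ z - y $ z\<bar>"
      by (intro mult_right_mono member_le_sum) auto
    finally show "c $ z * (y $ z - x $ z) \<le> (\<Sum>z'\<in>UNIV. \<bar>c $ z'\<bar>) * \<bar>x $ z - y $ z\<bar>" .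
  qed
  also have "\<dots> = (\<Sum>z\<in>UNIV. \<bar>c $ z\<bar>) * norm1 (x - y)"
    unfolding norm1_def by (simp add: sum_distrib_left)
  finally show ?thesis .
qed

lemma is_repr_lipschitz:
  assumes rep: "is_repr Vs m c" and x: "x \<in> prob_simplex" and y: "y \<in> prob_simplex"
  shows "Vs y \<le> Vs x + (\<Sum>\<alpha><m. \<Sum>z\<in>UNIV. \<bar>c \<alpha> $ z\<bar>) * norm1 (x - y)"
proof -
  have "0 < m" and Vs: "\<And>x. x \<in> prob_simplex \<Longrightarrow> Vs x = Min ((\<lambda>\<alpha>. linf (c \<alpha>) x) ` {..<m})"
    using rep unfolding is_repr_def by auto
  have "Min ((\<lambda>\<alpha>. linf (c \<alpha>) x) ` {..<m}) \<in> (\<lambda>\<alpha>. linf (c \<alpha>) x) ` {..<m}"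
    using \<open>0 < m\<close> by (intro Min_in) auto
  then obtain \<beta> where \<beta>: "\<beta> < m" "Vs x = linf (c \<beta>) x"
    using Vs[OF x] by auto
  have "(\<Sum>z\<in>UNIV. \<bar>c \<beta> $ z\<bar>) \<le> (\<Sum>\<alpha><m. \<Sum>z\<in>UNIV. \<bar>c \<alpha> $ z\<bar>)"
    using \<beta>(1) by (intro member_le_sum) (auto intro: sum_nonneg)
  then have "(\<Sum>z\<in>UNIV. \<bar>c \<beta> $ z\<bar>) * norm1 (x - y) \<le> (\<Sum>\<alpha><m. \<Sum>z\<in>UNIV. \<bar>c \<alpha> $ z\<bar>) * norm1 (x - y)"
    using norm1_nonneg by (rule mult_right_mono)
  moreover have "Vs y \<le> linf (c \<beta>) y" using Vs[OF y] \<beta>(1) by simp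
  ultimately show ?thesis using linf_diff_le[of "c \<beta>" y x] \<beta>(2) by linarith
qed

lemma gap_lipschitz:
  fixes L :: "'a::finite \<Rightarrow> 'z::finite \<Rightarrow> real" and S :: "'a \<Rightarrow> 'z \<Rightarrow> 's"
  assumes L: "\<forall>a z. \<bar>L a z\<bar> \<le> 1" and rep: "is_repr (Vstar L S) m c"
  shows "\<exists>C>0. \<forall>\<pi>\<in>prob_simplex. \<forall>x\<in>prob_simplex. \<forall>y\<in>prob_simplex.
           gap L S \<pi> x \<le> gap L S \<pi> y + C * norm1 (x - y)"
proof -
  obtain C1 where "C1 \<ge> 0" and C1: "\<forall>\<pi>\<in>prob_simplex. \<forall>x\<in>prob_simplex. \<forall>y\<in>prob_simplex.
      Vfun L S \<pi> x \<le> Vfun L S \<pi> y + C1 * norm1 (x - y)"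
    using Vfun_lipschitz[OF L, of S] by blast
  define K where "K = (\<Sum>\<alpha><m. \<Sum>z\<in>UNIV. \<bar>c \<alpha> $ z\<bar>)"
  have "0 \<le> K" unfolding K_def by (intro sum_nonneg) auto
  show ?thesis
  proof (intro exI[of _ "C1 + K + 1"] conjI ballI)
    fix \<pi> :: "real^'a" and x y :: "real^'z"
    assume "\<pi> \<in> prob_simplex" "x \<in> prob_simplex" "y \<in> prob_simplex"
    then have "Vfun L S \<pi> x \<le> Vfun L S \<pi> y + C1 * norm1 (x - y)"
      and "Vstar L S y \<le> Vstar L S x + K * norm1 (x - y)"
      using C1 is_repr_lipschitz[OF rep, of x y] unfolding K_def by auto
    then have "gap L S \<pi> x \<le> gap L S \<pi> y + (C1 + K) * norm1 (x - y)"
      unfolding gap_def distrib_right by linarith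
    then show "gap L S \<pi> x \<le> gap L S \<pi> y + (C1 + K + 1) * norm1 (x - y)"
      using norm1_nonneg[of "x - y"] by (simp add: algebra_simps)
  qed (use \<open>C1 \<ge> 0\<close> \<open>0 \<le> K\<close> in simp)
qed

section \<open>The gap vanishes on faces of the cells\<close>

lemma gap_eq_0_on_face:
  assumes L: "\<forall>a z. \<bar>L a z\<bar> \<le> 1"
    and face: "F face_of cell (Vstar L S) c \<alpha>" and x0: "x0 \<in> rel_interior F"
    and \<pi>: "\<pi> \<in> prob_simplex" and gap_x0: "gap L S \<pi> x0 = 0" and y: "y \<in> F"
  shows "gap L S \<pi> y = 0"
proof -
  have on_cell: "u \<in> prob_simplex \<and> Vstar L S u = linf (c \<alpha>) u" if "u \<in> F" for u
    using face_of_imp_subset[OF face] that unfolding cell_def by auto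
  obtain e where "e > 1" and "(1 - e) *\<^sub>R y + e *\<^sub>R x0 \<in> F"
    using x0 y convex_rel_interior_iff[OF face_of_imp_convex[OF face]] by blast
  define w where "w = (1 - e) *\<^sub>R y + e *\<^sub>R x0"
  define t where "t = 1 / e"
  have t: "0 < t" "t < 1" using \<open>e > 1\<close> unfolding t_def by auto
  have x0_eq: "x0 = (1 - t) *\<^sub>R y + t *\<^sub>R w"
    using \<open>e > 1\<close> unfolding t_def w_def by (simp add: vec_eq_iff field_simps)
  have "w \<in> F" "x0 \<in> F" using \<open>(1 - e) *\<^sub>R y + e *\<^sub>R x0 \<in> F\<close> x0 rel_interior_subset w_def by auto
  then have cell_pts: "y \<in> prob_simplex" "w \<in> prob_simplex" "x0 \<in> prob_simplex"
    "Vstar L S y = linf (c \<alpha>) y" "Vstar L S w = linf (c \<alpha>) w" "Vstar L S x0 = linf (c \<alpha>) x0"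
    using on_cell y by auto
  have concave: "(1 - t) * Vfun L S \<pi> y + t * Vfun L S \<pi> w \<le> Vfun L S \<pi> x0"
    using Vfun_concave[OF L \<pi> cell_pts(1,2) t, of S] unfolding x0_eq .
  have linear: "linf (c \<alpha>) x0 = (1 - t) * linf (c \<alpha>) y + t * linf (c \<alpha>) w"
    unfolding x0_eq by (rule linf_add_scaleR)
  have "(1 - t) * gap L S \<pi> y + t * gap L S \<pi> w
      = ((1 - t) * Vfun L S \<pi> y + t * Vfun L S \<pi> w) - ((1 - t) * linf (c \<alpha>) y + t * linf (c \<alpha>) w)"
    unfolding gap_def cell_pts(4,5) by (simp add: algebra_simps)
  also have "\<dots> \<le> gap L S \<pi> x0"
    unfolding gap_def cell_pts(6) using concave linear by linarith
  finally have "(1 - t) * gap L S \<pi> y + t * gap L S \<pi> w \<le> gap L S \<pi> x0" .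
  moreover have "0 \<le> t * gap L S \<pi> w"
    using gap_nonneg[OF L \<pi> cell_pts(2), of S] t by simp
  ultimately have "(1 - t) * gap L S \<pi> y \<le> 0"
    using gap_x0 by linarith
  then show ?thesis
    using gap_nonneg[OF L \<pi> cell_pts(1), of S] t by (simp add: mult_le_0_iff)
qed

lemma NF_gap_eq_0_on_face:
  assumes L: "\<forall>a z. \<bar>L a z\<bar> \<le> 1"
    and face: "F face_of cell (Vstar L S) c \<alpha>" and "F \<noteq> {}"
    and \<pi>: "\<pi> \<in> NF L S F" and y: "y \<in> F"
  shows "gap L S \<pi> y = 0"
proof -
  have "rel_interior F \<noteq> {}"
    using \<open>F \<noteq> {}\<close> rel_interior_eq_empty face_of_imp_convex[OF face] by blast
  then have "(SOME x. x \<in> rel_interior F) \<in> rel_interior F" by (simp add: some_in_eq)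
  moreover have "\<pi> \<in> prob_simplex" and "gap L S \<pi> (SOME x. x \<in> rel_interior F) = 0"
    using \<pi> unfolding NF_def Nset_def by auto
  ultimately show ?thesis by (rule gap_eq_0_on_face[OF L face _ _ _ y])
qed

lemma le_mult_dist1:
  assumes "F \<noteq> {}" "0 < C" "\<And>y. y \<in> F \<Longrightarrow> g \<le> C * norm1 (x - y)"
  shows "g \<le> C * dist1 x F"
proof -
  have "g / C \<le> dist1 x F"
    unfolding dist1_def using assms
    by (intro cINF_greatest) (auto simp: norm1_def pos_divide_le_eq mult.commute)
  with \<open>0 < C\<close> show ?thesis by (simp add: pos_divide_le_eq mult.commute)
qed

theorem lemma9:
  fixes L :: "'a::finite \<Rightarrow> 'z::finite \<Rightarrow> real" and S :: "'a \<Rightarrow> 'z \<Rightarrow> 's"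
    and m :: nat and c :: "nat \<Rightarrow> real^'z"
  assumes "\<forall>a z. 0 \<le> L a z \<and> L a z \<le> 1"
    and "is_repr (Vstar L S) m c"
    and "\<forall>n<m. \<forall>c'. \<not> is_repr (Vstar L S) n c'"
  shows "\<exists>Lip::real. \<forall>F\<in>face_family (Vstar L S) m c. F \<noteq> {} \<longrightarrow>
           (\<forall>x\<in>prob_simplex. \<forall>\<pi>\<in>NF L S F. gap L S \<pi> x \<le> Lip * dist1 x F)"
proof -
  have L: "\<forall>a z. \<bar>L a z\<bar> \<le> 1" using assms(1) by (simp add: abs_le_iff)
  obtain C where "C > 0" and C: "\<forall>\<pi>\<in>prob_simplex. \<forall>x\<in>prob_simplex. \<forall>y\<in>prob_simplex.
      gap L S \<pi> x \<le> gap L S \<pi> y + C * norm1 (x - y)"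
    using gap_lipschitz[OF L assms(2)] by blast
  show ?thesis
  proof (intro exI[of _ C] ballI impI)
    fix F :: "(real^'z) set" and x :: "real^'z" and \<pi> :: "real^'a"
    assume F: "F \<in> face_family (Vstar L S) m c" "F \<noteq> {}" and x: "x \<in> prob_simplex" and \<pi>: "\<pi> \<in> NF L S F"
    obtain \<alpha> where face: "F face_of cell (Vstar L S) c \<alpha>"
      using F(1) unfolding face_family_def by blast
    have "gap L S \<pi> x \<le> C * norm1 (x - y)" if "y \<in> F" for y
    proof -
      have "y \<in> prob_simplex" using face_of_imp_subset[OF face] that by (auto simp: cell_def)
      moreover have "\<pi> \<in> prob_simplex" using \<pi> by (simp add: NF_def Nset_def)
      ultimately show ?thesis
        using C x NF_gap_eq_0_on_face[OF L face F(2) \<pi> that] by fastforce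
    qed
    with F(2) \<open>C > 0\<close> show "gap L S \<pi> x \<le> C * dist1 x F" by (rule le_mult_dist1)
  qed
qed

end
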